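(* The set $\mathcal U\setminus(A_1\cup A_2\cup A_3)$ has four connected components $\mathcal U_0,\mathcal U_1,\mathcal U_2,\mathcal U_3$ ($\mathcal U_0$ the central triangle with vertices $a_1,a_2,a_3$, and $\mathcal U_i$ the region bounded by $A_i$ and $Q$), and $f$ maps each $\mathcal U_j$ homeomorphically onto $\mathcal U$.
   Context: $f=g\circ h$ with $g[x_1:x_2:x_3]=[x_1^2:x_2^2:x_3^2]$ and $h[x_1:x_2:x_3]=[x_1(-x_1+x_2+x_3):x_2(x_1-x_2+x_3):x_3(x_1+x_2-x_3)]$. $a_1=[0:1:1]$, $a_2=[1:0:1]$, $a_3=[1:1:0]$; $A_i$ is the line through $\{a_1,a_2,a_3\}\setminus\{a_i\}$. $Q=\{\rho=0\}$ with $\rho=x_1^2+x_2^2+x_3^2-2(x_1x_2+x_2x_3+x_3x_1)$, and $\mathcal U=\{[x]\in\mathbb{RP}^2:\rho(x)<0\}$, an open disk in $\mathbb{RP}^2$ with $a_1,a_2,a_3$ on its boundary. *)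

theory Defs
  imports "HOL-Analysis.Analysis"
begin

text \<open>Real projective plane: a point is a line through the origin of real^3,
  represented as the set of nonzero multiples of a nonzero vector.\<close>

definition proj :: "real^3 \<Rightarrow> (real^3) set" where
  "proj x = {c *\<^sub>R x | c. c \<noteq> 0}"

definition RP2 :: "(real^3) set set" where
  "RP2 = proj ` (UNIV - {0})"

definition RP2_top :: "(real^3) set topology" where
  "RP2_top = topology (\<lambda>S. S \<subseteq> RP2 \<and> open {x. x \<noteq> 0 \<and> proj x \<in> S})"

lemma istopology_RP2: "istopology (\<lambda>S. S \<subseteq> RP2 \<and> open {x. x \<noteq> 0 \<and> proj x \<in> S})"
  unfolding istopology_def
proof (rule conjI; intro allI impI)
  fix S T :: "(real^3) set set"
  assume hS: "S \<subseteq> RP2 \<and> open {x. x \<noteq> 0 \<and> proj x \<in> S}"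
     and hT: "T \<subseteq> RP2 \<and> open {x. x \<noteq> 0 \<and> proj x \<in> T}"
  have e: "{x. x \<noteq> 0 \<and> proj x \<in> S \<inter> T} = {x. x \<noteq> 0 \<and> proj x \<in> S} \<inter> {x. x \<noteq> 0 \<and> proj x \<in> T}" by auto
  have "open ({x. x \<noteq> 0 \<and> proj x \<in> S} \<inter> {x. x \<noteq> 0 \<and> proj x \<in> T})"
    using hS hT by (intro open_Int) auto
  then show "S \<inter> T \<subseteq> RP2 \<and> open {x. x \<noteq> 0 \<and> proj x \<in> S \<inter> T}"
    using hS e by auto
next
  fix K :: "(real^3) set set set"
  assume K: "\<forall>S\<in>K. S \<subseteq> RP2 \<and> open {x. x \<noteq> 0 \<and> proj x \<in> S}"
  have "{x. x \<noteq> 0 \<and> proj x \<in> \<Union>K} = (\<Union>S\<in>K. {x. x \<noteq> 0 \<and> proj x \<in> S})" by auto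
  with K show "\<Union>K \<subseteq> RP2 \<and> open {x. x \<noteq> 0 \<and> proj x \<in> \<Union>K}" by auto
qed

lemma openin_RP2_top:
  "openin RP2_top S \<longleftrightarrow> S \<subseteq> RP2 \<and> open {x. x \<noteq> 0 \<and> proj x \<in> S}"
  unfolding RP2_top_def using istopology_RP2 by (simp add: topology_inverse')

text \<open>A polynomial self-map of real^3 (homogeneous) induces a map on RP2.\<close>
definition proj_map :: "(real^3 \<Rightarrow> real^3) \<Rightarrow> (real^3) set \<Rightarrow> (real^3) set" where
  "proj_map F L = proj (F (SOME x. x \<in> L))"

definition g_poly :: "real^3 \<Rightarrow> real^3" where
  "g_poly x = vector [(x$1)^2, (x$2)^2, (x$3)^2]"

definition h_poly :: "real^3 \<Rightarrow> real^3" where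
  "h_poly x = vector [x$1 * (- x$1 + x$2 + x$3), x$2 * (x$1 - x$2 + x$3), x$3 * (x$1 + x$2 - x$3)]"

definition fP :: "(real^3) set \<Rightarrow> (real^3) set" where
  "fP = proj_map g_poly \<circ> proj_map h_poly"

definition a1 :: "(real^3) set" where "a1 = proj (vector [0, 1, 1])"
definition a2 :: "(real^3) set" where "a2 = proj (vector [1, 0, 1])"
definition a3 :: "(real^3) set" where "a3 = proj (vector [1, 1, 0])"

definition proj_line :: "real^3 \<Rightarrow> real^3 \<Rightarrow> (real^3) set set" where
  "proj_line u v = proj ` (span {u, v} - {0})"

definition A1 :: "(real^3) set set" where "A1 = proj_line (vector [1, 0, 1]) (vector [1, 1, 0])"
definition A2 :: "(real^3) set set" where "A2 = proj_line (vector [0, 1, 1]) (vector [1, 1, 0])"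
definition A3 :: "(real^3) set set" where "A3 = proj_line (vector [0, 1, 1]) (vector [1, 0, 1])"

definition rho :: "real^3 \<Rightarrow> real" where
  "rho x = (x$1)^2 + (x$2)^2 + (x$3)^2 - 2 * (x$1 * x$2 + x$2 * x$3 + x$3 * x$1)"

definition U :: "(real^3) set set" where
  "U = {proj x | x. x \<noteq> 0 \<and> rho x < 0}"

definition U0 :: "(real^3) set set" where
  "U0 = {proj (t1 *\<^sub>R vector [0, 1, 1] + t2 *\<^sub>R vector [1, 0, 1] + t3 *\<^sub>R vector [1, 1, 0])
          | t1 t2 t3. t1 > 0 \<and> t2 > 0 \<and> t3 > 0}"

text \<open>U_i: the part of the disk U on the side of A_i opposite to a_i.
  Sides are measured with the affine chart x1+x2+x3 \<noteq> 0, which contains U.\<close>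
definition Ureg :: "(real^3 \<Rightarrow> real) \<Rightarrow> (real^3) set set" where
  "Ureg l = {proj x | x. x \<noteq> 0 \<and> rho x < 0 \<and> l x * (x$1 + x$2 + x$3) < 0}"

definition U1 :: "(real^3) set set" where "U1 = Ureg (\<lambda>x. - x$1 + x$2 + x$3)"
definition U2 :: "(real^3) set set" where "U2 = Ureg (\<lambda>x. x$1 - x$2 + x$3)"
definition U3 :: "(real^3) set set" where "U3 = Ureg (\<lambda>x. x$1 + x$2 - x$3)"

end

theory Submission
  imports Defs
begin

text \<open>
  In the coordinates \<open>l\<^sub>k = x\<^sub>1 + x\<^sub>2 + x\<^sub>3 - 2 x\<^sub>k\<close>, whose zero sets are the lines
  \<open>A\<^sub>k\<close>, one has \<open>\<rho> = -(l\<^sub>1 l\<^sub>2 + l\<^sub>2 l\<^sub>3 + l\<^sub>1 l\<^sub>3)\<close>, and \<open>h\<close> is the quadratic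
  Cremona involution: \<open>h (h x) = l\<^sub>1 l\<^sub>2 l\<^sub>3 x\<close>. On \<open>U\<close> all coordinates of \<open>x\<close> have one
  sign, so the signs of the coordinates of \<open>h x\<close> are those of \<open>l\<^sub>k (x\<^sub>1 + x\<^sub>2 + x\<^sub>3)\<close>, and
  \<open>\<rho> < 0\<close> allows at most one of these to be negative. Hence \<open>U\<close> minus the lines is the
  disjoint union of the four open sheets on which \<open>h x\<close> has a fixed sign pattern \<open>e\<close>
  with at most one minus sign; these are \<open>U\<^sub>0, \<dots>, U\<^sub>3\<close>.

  On the sheet with sign pattern \<open>e\<close>, \<open>f = g \<circ> h\<close> is inverted by \<open>z \<mapsto> h (e \<cdot> sqrt z)\<close>:
  the square roots recover \<open>h x\<close> from \<open>g (h x)\<close> because its signs are known, and \<open>h \<circ> h\<close>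
  is a scalar. The triangle \<open>U\<^sub>0\<close> is the image of a convex cone, hence connected, and the
  homeomorphisms carry connectedness to \<open>U\<close> and from there to every sheet. Four disjoint
  nonempty open connected sets covering a space are its connected components.
\<close>

section \<open>Regions of the projective plane and maps induced by homogeneous maps\<close>

lemma mem_proj_iff: "y \<in> proj x \<longleftrightarrow> (\<exists>c. c \<noteq> 0 \<and> y = c *\<^sub>R x)"
  unfolding proj_def by auto

lemma self_mem_proj: "x \<in> proj x"
  unfolding mem_proj_iff by (auto intro!: exI[of _ 1])

lemma proj_scaleR:
  assumes "c \<noteq> 0"
  shows "proj (c *\<^sub>R x) = proj x"
proof (intro set_eqI iffI)
  fix y
  assume "y \<in> proj (c *\<^sub>R x)"
  then obtain d where "d \<noteq> 0" "y = (d * c) *\<^sub>R x"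
    by (auto simp: mem_proj_iff)
  then show "y \<in> proj x"
    unfolding mem_proj_iff using assms by (intro exI[of _ "d * c"]) auto
next
  fix y
  assume "y \<in> proj x"
  then obtain d where "d \<noteq> 0" "y = (d / c) *\<^sub>R c *\<^sub>R x"
    using assms by (auto simp: mem_proj_iff)
  then show "y \<in> proj (c *\<^sub>R x)"
    unfolding mem_proj_iff using assms by (intro exI[of _ "d / c"]) auto
qed

lemma proj_eq_iff: "proj x = proj y \<longleftrightarrow> (\<exists>c. c \<noteq> 0 \<and> y = c *\<^sub>R x)"
proof
  assume "proj x = proj y"
  then have "y \<in> proj x"
    using self_mem_proj[of y] by simp
  then show "\<exists>c. c \<noteq> 0 \<and> y = c *\<^sub>R x"
    by (simp add: mem_proj_iff)
qed (auto simp: proj_scaleR)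

lemma proj_in_RP2: "x \<noteq> 0 \<Longrightarrow> proj x \<in> RP2"
  unfolding RP2_def by auto

lemma topspace_RP2_top: "topspace RP2_top = RP2"
proof -
  have "{x. x \<noteq> 0 \<and> proj x \<in> RP2} = - {0}"
    using proj_in_RP2 by auto
  then have "openin RP2_top RP2"
    by (simp add: openin_RP2_top open_Compl)
  then show ?thesis
    by (meson openin_RP2_top openin_subset openin_topspace subset_antisym)
qed

lemma topspace_subtopology_RP2_top: "V \<subseteq> RP2 \<Longrightarrow> topspace (subtopology RP2_top V) = V"
  by (auto simp: topspace_RP2_top)

definition proj_homogeneous :: "(real^3 \<Rightarrow> real^3) \<Rightarrow> bool" where
  "proj_homogeneous F \<longleftrightarrow> (\<forall>c x. c \<noteq> 0 \<longrightarrow> (\<exists>k. k \<noteq> 0 \<and> F (c *\<^sub>R x) = k *\<^sub>R F x))"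

lemma proj_map_proj:
  assumes "proj_homogeneous F" "x \<noteq> 0"
  shows "proj_map F (proj x) = proj (F x)"
proof -
  have "(SOME y. y \<in> proj x) \<in> proj x"
    by (rule someI[of _ x]) (rule self_mem_proj)
  then obtain c where "c \<noteq> 0" "(SOME y. y \<in> proj x) = c *\<^sub>R x"
    using mem_proj_iff by metis
  with assms(1) obtain k where "k \<noteq> 0" "F (SOME y. y \<in> proj x) = k *\<^sub>R F x"
    unfolding proj_homogeneous_def by metis
  then show ?thesis
    by (simp add: proj_map_def proj_scaleR)
qed

definition scale_invariant :: "(real^3 \<Rightarrow> bool) \<Rightarrow> bool" where
  "scale_invariant P \<longleftrightarrow> (\<forall>c x. c \<noteq> 0 \<longrightarrow> P (c *\<^sub>R x) = P x)"

definition proj_region :: "(real^3 \<Rightarrow> bool) \<Rightarrow> (real^3) set set" where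
  "proj_region P = proj ` {x. x \<noteq> 0 \<and> P x}"

lemma proj_regionE:
  assumes L: "L \<in> proj_region P"
  obtains x where "x \<noteq> 0" "P x" "L = proj x"
  using L unfolding proj_region_def by blast

lemma proj_mem_proj_region:
  assumes "scale_invariant P" "x \<noteq> 0"
  shows "proj x \<in> proj_region P \<longleftrightarrow> P x"
proof
  assume "proj x \<in> proj_region P"
  then obtain y where "y \<noteq> 0" "P y" "proj y = proj x"
    by (auto simp: proj_region_def)
  then obtain c where "c \<noteq> 0" "x = c *\<^sub>R y"
    by (auto simp: proj_eq_iff)
  then show "P x"
    using assms(1) \<open>P y\<close> unfolding scale_invariant_def by blast
qed (use assms(2) in \<open>auto simp: proj_region_def\<close>)

lemma proj_region_cone:
  "scale_invariant P \<Longrightarrow> {x. x \<noteq> 0 \<and> proj x \<in> proj_region P} = {x. x \<noteq> 0 \<and> P x}"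
  by (auto simp: proj_mem_proj_region)

lemma proj_region_subset_RP2: "proj_region P \<subseteq> RP2"
  unfolding proj_region_def using proj_in_RP2 by auto

lemma openin_proj_region:
  assumes "scale_invariant P" "open {x. x \<noteq> 0 \<and> P x}"
  shows "openin RP2_top (proj_region P)"
  using assms by (simp add: openin_RP2_top proj_region_cone proj_region_subset_RP2)

lemma continuous_map_proj_map:
  assumes P: "scale_invariant P" "open {x. x \<noteq> 0 \<and> P x}"
    and F: "proj_homogeneous F" "continuous_on {x. x \<noteq> 0 \<and> P x} F"
    and nonzero: "\<And>x. x \<noteq> 0 \<Longrightarrow> P x \<Longrightarrow> F x \<noteq> 0"
  shows "continuous_map (subtopology RP2_top (proj_region P)) RP2_top (proj_map F)"
  unfolding continuous_map topspace_subtopology_RP2_top[OF proj_region_subset_RP2]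
proof (intro conjI allI impI)
  show "proj_map F ` proj_region P \<subseteq> topspace RP2_top"
    using nonzero by (auto simp: proj_region_def proj_map_proj[OF F(1)] topspace_RP2_top proj_in_RP2)
next
  fix S
  assume S: "openin RP2_top S"
  define A where "A = {L \<in> proj_region P. proj_map F L \<in> S}"
  have "proj x \<in> A \<longleftrightarrow> P x \<and> F x \<noteq> 0 \<and> proj (F x) \<in> S" if "x \<noteq> 0" for x
    using that nonzero by (auto simp: A_def proj_mem_proj_region[OF P(1)] proj_map_proj[OF F(1)])
  then have "{x. x \<noteq> 0 \<and> proj x \<in> A} = {x. x \<noteq> 0 \<and> P x} \<inter> F -` {y. y \<noteq> 0 \<and> proj y \<in> S}"
    by blast
  moreover have "open ({x. x \<noteq> 0 \<and> P x} \<inter> F -` {y. y \<noteq> 0 \<and> proj y \<in> S})"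
    using S P(2) F(2) by (intro continuous_open_preimage) (auto simp: openin_RP2_top)
  moreover have "A \<subseteq> proj_region P"
    by (auto simp: A_def)
  ultimately have "openin RP2_top A"
    using proj_region_subset_RP2[of P] by (simp add: openin_RP2_top)
  then show "openin (subtopology RP2_top (proj_region P)) A"
    using \<open>A \<subseteq> proj_region P\<close> by (auto simp: openin_subtopology intro!: exI[of _ A])
qed

lemma homeomorphic_maps_proj_map:
  assumes P: "scale_invariant P" "open {x. x \<noteq> 0 \<and> P x}"
    and Q: "scale_invariant Q" "open {x. x \<noteq> 0 \<and> Q x}"
    and F: "proj_homogeneous F" "continuous_on {x. x \<noteq> 0 \<and> P x} F"
    and G: "proj_homogeneous G" "continuous_on {x. x \<noteq> 0 \<and> Q x} G"
    and FG: "\<And>x. x \<noteq> 0 \<Longrightarrow> P x \<Longrightarrow> F x \<noteq> 0 \<and> Q (F x) \<and> proj (G (F x)) = proj x"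
    and GF: "\<And>z. z \<noteq> 0 \<Longrightarrow> Q z \<Longrightarrow> G z \<noteq> 0 \<and> P (G z) \<and> proj (F (G z)) = proj z"
  shows "homeomorphic_maps (subtopology RP2_top (proj_region P)) (subtopology RP2_top (proj_region Q))
           (proj_map F) (proj_map G)"
proof -
  have F_into: "proj_map F L \<in> proj_region Q" and GF_id: "proj_map G (proj_map F L) = L"
    if L: "L \<in> proj_region P" for L
  proof -
    obtain x where x: "x \<noteq> 0" "P x" "L = proj x"
      using L by (rule proj_regionE)
    then show "proj_map F L \<in> proj_region Q" "proj_map G (proj_map F L) = L"
      using FG[OF x(1,2)] by (auto simp: proj_map_proj F(1) G(1) proj_region_def)
  qed
  have G_into: "proj_map G L \<in> proj_region P" and FG_id: "proj_map F (proj_map G L) = L"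
    if L: "L \<in> proj_region Q" for L
  proof -
    obtain z where z: "z \<noteq> 0" "Q z" "L = proj z"
      using L by (rule proj_regionE)
    then show "proj_map G L \<in> proj_region P" "proj_map F (proj_map G L) = L"
      using GF[OF z(1,2)] by (auto simp: proj_map_proj F(1) G(1) proj_region_def)
  qed
  show ?thesis
    unfolding homeomorphic_maps_def continuous_map_in_subtopology
      topspace_subtopology_RP2_top[OF proj_region_subset_RP2]
    using continuous_map_proj_map[OF P F] continuous_map_proj_map[OF Q G] FG GF
      F_into G_into GF_id FG_id by blast
qed

lemma continuous_map_proj: "0 \<notin> S \<Longrightarrow> continuous_map (top_of_set S) RP2_top proj"
  unfolding continuous_map
proof (intro conjI allI impI)
  assume "0 \<notin> S"
  then show "proj ` topspace (top_of_set S) \<subseteq> topspace RP2_top"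
    by (auto simp: topspace_RP2_top intro: proj_in_RP2)
  fix V
  assume "openin RP2_top V"
  then have "open {x. x \<noteq> 0 \<and> proj x \<in> V}"
    by (simp add: openin_RP2_top)
  moreover have "{x \<in> topspace (top_of_set S). proj x \<in> V} = S \<inter> {x. x \<noteq> 0 \<and> proj x \<in> V}"
    using \<open>0 \<notin> S\<close> by auto
  ultimately show "openin (top_of_set S) {x \<in> topspace (top_of_set S). proj x \<in> V}"
    by (auto simp: openin_open)
qed

lemma connected_components_of_open_partition:
  assumes cover: "\<Union>\<F> = topspace X" and disj: "pairwise disjnt \<F>"
    and nonempty: "\<And>C. C \<in> \<F> \<Longrightarrow> C \<noteq> {}"
    and connected: "\<And>C. C \<in> \<F> \<Longrightarrow> connectedin X C"
    and opn: "\<And>C. C \<in> \<F> \<Longrightarrow> openin X C"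
  shows "connected_components_of X = \<F>"
proof -
  have closed: "closedin X C" if "C \<in> \<F>" for C
  proof -
    have "topspace X - C = \<Union>(\<F> - {C})"
      using disj that unfolding cover[symmetric] pairwise_def disjnt_def by auto
    moreover have "openin X (\<Union>(\<F> - {C}))"
      using opn by (intro openin_Union) auto
    moreover have "C \<subseteq> topspace X"
      using cover that by auto
    ultimately show ?thesis
      unfolding closedin_def by simp
  qed
  have component: "connected_component_of_set X x = C" if C: "C \<in> \<F>" "x \<in> C" for C x
  proof
    show "C \<subseteq> connected_component_of_set X x"
      using connected_component_of_maximal[OF connected[OF C(1)] C(2)] .
    have "x \<in> connected_component_of_set X x"
      using cover C by (auto simp: connected_component_of_refl)
    moreover have "connected_component_of_set X x \<subseteq> C \<or> disjnt (connected_component_of_set X x) C"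
      by (rule connectedin_clopen_cases[OF connectedin_connected_component_of closed[OF C(1)] opn[OF C(1)]])
    ultimately show "connected_component_of_set X x \<subseteq> C"
      using C(2) by (auto simp: disjnt_def)
  qed
  show ?thesis
    unfolding connected_components_of_def
  proof
    show "connected_component_of_set X ` topspace X \<subseteq> \<F>"
    proof
      fix K
      assume "K \<in> connected_component_of_set X ` topspace X"
      then obtain x C where "K = connected_component_of_set X x" "C \<in> \<F>" "x \<in> C"
        using cover by blast
      then show "K \<in> \<F>"
        using component by simp
    qed
    show "\<F> \<subseteq> connected_component_of_set X ` topspace X"
    proof
      fix C
      assume C: "C \<in> \<F>"
      then obtain x where "x \<in> C"
        using nonempty by blast
      then show "C \<in> connected_component_of_set X ` topspace X"
        using component[OF C] cover C by blast
    qed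
  qed
qed

section \<open>The linear forms of the lines \<open>A\<^sub>k\<close>\<close>

definition coord_sum :: "real^3 \<Rightarrow> real" where
  "coord_sum x = x$1 + x$2 + x$3"

definition line_forms :: "real^3 \<Rightarrow> real^3" where
  "line_forms x = (\<chi> k. coord_sum x - 2 * x$k)"

definition line_prod :: "real^3 \<Rightarrow> real" where
  "line_prod x = line_forms x $ 1 * line_forms x $ 2 * line_forms x $ 3"

lemma vec3_eq_iff: "(u :: real^3) = v \<longleftrightarrow> u$1 = v$1 \<and> u$2 = v$2 \<and> u$3 = v$3"
  by (simp add: vec_eq_iff forall_3)

lemma line_forms_nth:
  "line_forms x $ 1 = - x$1 + x$2 + x$3"
  "line_forms x $ 2 = x$1 - x$2 + x$3"
  "line_forms x $ 3 = x$1 + x$2 - x$3"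
  by (simp_all add: line_forms_def coord_sum_def)

lemma line_forms_0 [simp]: "line_forms 0 $ k = 0"
  by (simp add: line_forms_def coord_sum_def)

lemmas poly_defs = line_forms_nth coord_sum_def line_prod_def rho_def g_poly_def h_poly_def

lemma h_poly_nth: "h_poly x $ k = x$k * line_forms x $ k"
  using exhaust_3[of k] by (auto simp: h_poly_def line_forms_nth)

lemma g_poly_nth: "g_poly y $ k = (y$k)\<^sup>2"
  using exhaust_3[of k] by (auto simp: g_poly_def)

lemma coord_sum_line_forms: "coord_sum x = line_forms x $ 1 + line_forms x $ 2 + line_forms x $ 3"
  by (simp add: poly_defs)

lemma rho_line_forms:
  "rho x = - (line_forms x $ 1 * line_forms x $ 2 + line_forms x $ 2 * line_forms x $ 3
              + line_forms x $ 1 * line_forms x $ 3)"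
  by (simp add: poly_defs power2_eq_square algebra_simps)

lemma coord_sum_h_poly: "coord_sum (h_poly x) = - rho x"
  by (simp add: poly_defs power2_eq_square algebra_simps)

lemma line_prod_h_poly: "line_prod (h_poly x) = (line_prod x)\<^sup>2"
  by (simp add: poly_defs power2_eq_square algebra_simps)

lemma h_poly_h_poly: "h_poly (h_poly x) = line_prod x *\<^sub>R x"
  by (simp add: vec3_eq_iff poly_defs algebra_simps)

lemma rho_g_poly: "rho (g_poly y) = - coord_sum y * line_prod y"
  by (simp add: poly_defs power2_eq_square algebra_simps)

lemma rho_h_poly: "rho (h_poly x) = rho (g_poly x)"
  by (simp add: poly_defs power2_eq_square algebra_simps)

lemma rho_g_poly_h_poly: "rho (g_poly (h_poly x)) = rho x * (line_prod x)\<^sup>2"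
  by (simp add: rho_g_poly coord_sum_h_poly line_prod_h_poly)

lemma rho_scaleR: "rho (c *\<^sub>R x) = c\<^sup>2 * rho x"
  by (simp add: rho_def power2_eq_square algebra_simps)

lemma h_poly_scaleR: "h_poly (c *\<^sub>R x) = c\<^sup>2 *\<^sub>R h_poly x"
  by (simp add: vec3_eq_iff h_poly_def power2_eq_square algebra_simps)

lemma g_poly_scaleR: "g_poly (c *\<^sub>R x) = c\<^sup>2 *\<^sub>R g_poly x"
  by (simp add: vec3_eq_iff g_poly_def power2_eq_square algebra_simps)

lemma line_forms_scaleR: "line_forms (c *\<^sub>R x) = c *\<^sub>R line_forms x"
  by (simp add: vec3_eq_iff line_forms_nth algebra_simps)

lemma proj_homogeneous_h_poly: "proj_homogeneous h_poly"
  unfolding proj_homogeneous_def by (auto simp: h_poly_scaleR intro!: exI[of _ "c\<^sup>2" for c])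

lemma proj_homogeneous_g_poly: "proj_homogeneous g_poly"
  unfolding proj_homogeneous_def by (auto simp: g_poly_scaleR intro!: exI[of _ "c\<^sup>2" for c])

lemma proj_homogeneous_comp:
  "proj_homogeneous F \<Longrightarrow> proj_homogeneous G \<Longrightarrow> proj_homogeneous (G \<circ> F)"
  unfolding proj_homogeneous_def by (metis comp_apply mult_eq_0_iff scaleR_scaleR)

lemma continuous_on_h_poly: "continuous_on S h_poly"
proof -
  have eq: "h_poly = (\<lambda>x. \<chi> k. x$k * (x$1 + x$2 + x$3 - 2 * x$k))"
    by (auto simp: h_poly_nth line_forms_def coord_sum_def vec_eq_iff)
  show ?thesis
    unfolding eq by (intro continuous_on_vec_lambda continuous_intros)
qed

lemma continuous_on_g_poly: "continuous_on S g_poly"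
proof -
  have eq: "g_poly = (\<lambda>x. \<chi> k. (x$k)\<^sup>2)"
    by (auto simp: g_poly_def vec_eq_iff forall_3)
  show ?thesis
    unfolding eq by (intro continuous_on_vec_lambda continuous_intros)
qed

lemma fP_proj:
  assumes "x \<noteq> 0" "h_poly x \<noteq> 0"
  shows "fP (proj x) = proj (g_poly (h_poly x))"
  using assms by (simp add: fP_def proj_map_proj proj_homogeneous_h_poly proj_homogeneous_g_poly)

section \<open>Sign patterns over \<open>U\<close>\<close>

lemma pos_of_mult_pos_add_pos:
  fixes a b c :: real
  assumes "0 < a * b * c" "0 < a + b" "0 < a + c"
  shows "0 < a"
proof (rule ccontr)
  assume "\<not> 0 < a"
  moreover have "0 < b * c"
    using assms(2,3) calculation by simp
  ultimately have "a * (b * c) \<le> 0"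
    by (simp add: mult_nonpos_nonneg)
  with assms(1) show False
    by (simp add: mult.assoc)
qed

lemma mult_sum_pos_of_mult_sum_neg:
  fixes a b c :: real
  assumes e2: "0 < a * b + b * c + a * c" and a: "a * (a + b + c) < 0"
  shows "0 < b * (a + b + c)" "0 < c * (a + b + c)"
proof -
  let ?s = "a + b + c"
  have "b * c = (a * b + b * c + a * c) - a * ?s + a\<^sup>2"
    by (simp add: power2_eq_square algebra_simps)
  then have "0 < b * c"
    using e2 a zero_le_power2[of a] by linarith
  moreover have "0 < ?s * ?s"
    using a by (metis mult_zero_right not_real_square_gt_zero order_less_irrefl)
  ultimately have "0 < (b * ?s) * (c * ?s)"
    by (metis mult.commute mult.left_commute mult_pos_pos)
  moreover have "0 < b * ?s + c * ?s"
    using a \<open>0 < ?s * ?s\<close> by (simp add: algebra_simps)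
  ultimately show "0 < b * ?s" "0 < c * ?s"
    by (auto simp: zero_less_mult_iff)
qed

lemma rho_neg_imp_coord_mult_sum_pos:
  assumes "rho x < 0"
  shows "0 < x$k * coord_sum x"
proof -
  have "rho x = (x$1 + x$2 - x$3)\<^sup>2 - 4 * (x$1 * x$2)" "rho x = (x$1 + x$3 - x$2)\<^sup>2 - 4 * (x$1 * x$3)"
    "rho x = (x$2 + x$3 - x$1)\<^sup>2 - 4 * (x$2 * x$3)"
    by (simp_all add: rho_def power2_eq_square algebra_simps)
  then have "0 < x$1 * x$2" "0 < x$1 * x$3" "0 < x$2 * x$3"
    using assms by (smt (verit) zero_le_power2)+
  then show ?thesis
    using exhaust_3[of k]
    by (auto simp: coord_sum_def algebra_simps intro: add_nonneg_pos add_pos_nonneg add_pos_pos)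
qed

lemma rho_neg_imp_line_forms_mult_sum_pos:
  assumes "rho x < 0" "line_forms x $ i * coord_sum x < 0" "k \<noteq> i"
  shows "0 < line_forms x $ k * coord_sum x"
proof -
  have "0 < line_forms x $ 1 * line_forms x $ 2 + line_forms x $ 2 * line_forms x $ 3
          + line_forms x $ 1 * line_forms x $ 3"
    using assms(1) by (simp add: rho_line_forms)
  then show ?thesis
    using assms(2,3) exhaust_3[of i] exhaust_3[of k]
      mult_sum_pos_of_mult_sum_neg[of "line_forms x $ 1" "line_forms x $ 2" "line_forms x $ 3"]
      mult_sum_pos_of_mult_sum_neg[of "line_forms x $ 2" "line_forms x $ 1" "line_forms x $ 3"]
      mult_sum_pos_of_mult_sum_neg[of "line_forms x $ 3" "line_forms x $ 1" "line_forms x $ 2"]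
    by (auto simp: coord_sum_line_forms algebra_simps)
qed

section \<open>The sheets of \<open>f\<close> over \<open>U\<close>\<close>

definition in_sheet :: "real^3 \<Rightarrow> real^3 \<Rightarrow> bool" where
  "in_sheet e x \<longleftrightarrow> rho x < 0 \<and> (\<forall>k. 0 < e$k * h_poly x $ k)"

definition sheet :: "real^3 \<Rightarrow> (real^3) set set" where
  "sheet e = proj_region (in_sheet e)"

lemma topspace_sheet: "topspace (subtopology RP2_top (sheet e)) = sheet e"
  using proj_region_subset_RP2 by (auto simp: sheet_def topspace_RP2_top)

lemma scale_invariant_in_sheet: "scale_invariant (in_sheet e)"
  unfolding scale_invariant_def in_sheet_def
  by (auto simp: rho_scaleR h_poly_scaleR mult.left_commute[of _ "c\<^sup>2" for c]
      zero_less_mult_iff mult_less_0_iff)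

lemma open_in_sheet: "open {x. x \<noteq> 0 \<and> in_sheet e x}"
proof -
  have "{x. x \<noteq> 0 \<and> in_sheet e x}
      = - {0} \<inter> {x. rho x < 0} \<inter> (\<Inter>k. {x. 0 < e$k * h_poly x $ k})"
    by (auto simp: in_sheet_def)
  moreover have "continuous_on UNIV rho"
    unfolding rho_def by (intro continuous_intros)
  moreover have "continuous_on UNIV (\<lambda>x. e$k * h_poly x $ k)" for k
    by (intro continuous_intros continuous_on_h_poly)
  ultimately show ?thesis
    by (auto intro!: open_Int open_INT open_Collect_less)
qed

lemma in_sheet_imp_rho_neg: "in_sheet e x \<Longrightarrow> rho x < 0"
  by (simp add: in_sheet_def)

lemma in_sheet_nonzero: "in_sheet e x \<Longrightarrow> x \<noteq> 0"
  by (auto simp: in_sheet_def rho_def)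

lemma in_sheet_h_poly_nonzero:
  assumes "in_sheet e x"
  shows "h_poly x \<noteq> 0"
proof
  assume "h_poly x = 0"
  with assms show False
    by (auto simp: in_sheet_def)
qed

lemma in_sheet_line_forms_nonzero: "in_sheet e x \<Longrightarrow> line_forms x $ k \<noteq> 0"
  unfolding in_sheet_def by (metis h_poly_nth less_irrefl mult_zero_right)

lemma in_sheet_iff_line_forms:
  assumes "rho x < 0"
  shows "in_sheet e x \<longleftrightarrow> (\<forall>k. 0 < e$k * (line_forms x $ k * coord_sum x))"
proof -
  have "0 < e$k * h_poly x $ k \<longleftrightarrow> 0 < e$k * (line_forms x $ k * coord_sum x)" for k
  proof -
    have d: "0 < x$k * coord_sum x"
      using assms by (rule rho_neg_imp_coord_mult_sum_pos)
    then have "0 < (x$k)\<^sup>2"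
      by auto
    have "0 < e$k * h_poly x $ k \<longleftrightarrow> 0 < e$k * h_poly x $ k * (x$k * coord_sum x)"
      using d by (meson mult_pos_pos zero_less_mult_pos2)
    also have "e$k * h_poly x $ k * (x$k * coord_sum x)
        = e$k * (line_forms x $ k * coord_sum x) * (x$k)\<^sup>2"
      by (simp add: h_poly_nth power2_eq_square algebra_simps)
    also have "0 < e$k * (line_forms x $ k * coord_sum x) * (x$k)\<^sup>2
        \<longleftrightarrow> 0 < e$k * (line_forms x $ k * coord_sum x)"
      using \<open>0 < (x$k)\<^sup>2\<close> by (meson mult_pos_pos zero_less_mult_pos2)
    finally show ?thesis .
  qed
  then show ?thesis
    using assms by (simp add: in_sheet_def)
qed

definition signed_sqrt :: "real^3 \<Rightarrow> real^3 \<Rightarrow> real^3" where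
  "signed_sqrt e z = (\<chi> k. e$k * sqrt (z$k))"

lemma g_poly_signed_sqrt:
  assumes "\<And>k. \<bar>e$k\<bar> = 1" "\<And>k. 0 \<le> z$k"
  shows "g_poly (signed_sqrt e z) = z"
proof -
  have "(e$k)\<^sup>2 = 1" for k
    using assms(1)[of k] by (metis power2_abs power_one)
  then show ?thesis
    using assms(2) by (simp add: vec_eq_iff g_poly_nth signed_sqrt_def power_mult_distrib)
qed

lemma signed_sqrt_g_poly:
  assumes "\<And>k. \<bar>e$k\<bar> = 1" "\<And>k. 0 < e$k * y$k"
  shows "signed_sqrt e (g_poly y) = y"
proof -
  have "e$k * \<bar>y$k\<bar> = y$k" for k
    using assms(1)[of k] assms(2)[of k] by (auto simp: abs_if zero_less_mult_iff split: if_splits)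
  then show ?thesis
    by (simp add: vec_eq_iff g_poly_nth signed_sqrt_def)
qed

lemma signed_sqrt_scaleR: "signed_sqrt e (c *\<^sub>R z) = sqrt c *\<^sub>R signed_sqrt e z"
  by (simp add: vec_eq_iff signed_sqrt_def real_sqrt_mult)

lemma proj_homogeneous_signed_sqrt: "proj_homogeneous (signed_sqrt e)"
  unfolding proj_homogeneous_def by (auto simp: signed_sqrt_scaleR intro!: exI[of _ "sqrt c" for c])

lemma continuous_on_signed_sqrt: "continuous_on S (signed_sqrt e)"
  unfolding signed_sqrt_def by (intro continuous_on_vec_lambda continuous_intros)

lemma in_sheet_branch_inverse:
  assumes e: "\<And>k. \<bar>e$k\<bar> = 1" and x: "in_sheet e x"
  shows "line_prod x \<noteq> 0" "rho (g_poly (h_poly x)) < 0"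
    "h_poly (signed_sqrt e (g_poly (h_poly x))) = line_prod x *\<^sub>R x"
proof -
  show "line_prod x \<noteq> 0"
    using in_sheet_line_forms_nonzero[OF x] by (simp add: line_prod_def)
  then show "rho (g_poly (h_poly x)) < 0"
    using x by (simp add: rho_g_poly_h_poly in_sheet_def mult_neg_pos)
  have "signed_sqrt e (g_poly (h_poly x)) = h_poly x"
    using x by (intro signed_sqrt_g_poly e) (simp add: in_sheet_def)
  then show "h_poly (signed_sqrt e (g_poly (h_poly x))) = line_prod x *\<^sub>R x"
    by (simp add: h_poly_h_poly)
qed

lemma rho_neg_imp_coords_same_sign:
  assumes "rho z < 0"
  obtains "\<And>k. 0 < z$k" | "\<And>k. 0 < (- z)$k"
proof (cases "0 < coord_sum z")
  case True
  then show ?thesis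
    using rho_neg_imp_coord_mult_sum_pos[OF assms] by (intro that(1)) (auto simp: zero_less_mult_iff)
next
  case False
  then show ?thesis
    using rho_neg_imp_coord_mult_sum_pos[OF assms] by (intro that(2)) (auto simp: zero_less_mult_iff)
qed

lemma branch_inverse_in_sheet_pos:
  assumes e: "\<And>k. \<bar>e$k\<bar> = 1"
    and sum_pos: "0 < coord_sum (signed_sqrt e z)"
    and z: "\<And>k. 0 < z$k" "rho z < 0"
  shows "in_sheet e (h_poly (signed_sqrt e z))"
    "g_poly (h_poly (h_poly (signed_sqrt e z))) = (line_prod (signed_sqrt e z))\<^sup>2 *\<^sub>R z"
    "0 < line_prod (signed_sqrt e z)"
proof -
  define w where "w = signed_sqrt e z"
  have gw: "g_poly w = z"
    unfolding w_def using e z(1) by (intro g_poly_signed_sqrt) (auto intro: less_imp_le)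
  then have "rho z = - (coord_sum w * line_prod w)"
    using rho_g_poly[of w] by simp
  then have "0 < coord_sum w * line_prod w"
    using z(2) by linarith
  then show prod_pos: "0 < line_prod (signed_sqrt e z)"
    using sum_pos by (simp add: w_def zero_less_mult_iff)
  have "0 < e$k * h_poly (h_poly w) $ k" for k
  proof -
    have "e$k * h_poly (h_poly w) $ k = line_prod w * ((e$k)\<^sup>2 * sqrt (z$k))"
      by (simp add: h_poly_h_poly w_def signed_sqrt_def power2_eq_square)
    moreover have "(e$k)\<^sup>2 = 1"
      using e[of k] by (metis power2_abs power_one)
    ultimately show ?thesis
      using prod_pos z(1)[of k] by (simp add: w_def)
  qed
  moreover have "rho (h_poly w) < 0"
    using z(2) gw by (simp add: rho_h_poly)
  ultimately show "in_sheet e (h_poly (signed_sqrt e z))"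
    by (simp add: in_sheet_def w_def)
  show "g_poly (h_poly (h_poly (signed_sqrt e z))) = (line_prod (signed_sqrt e z))\<^sup>2 *\<^sub>R z"
    using gw by (simp add: h_poly_h_poly g_poly_scaleR w_def)
qed

text \<open>Isabelle's \<open>sqrt\<close> is odd, \<open>sqrt (- t) = - sqrt t\<close>, and \<open>h\<close> is even, so the
  branch is unchanged when \<open>z\<close> is replaced by \<open>- z\<close>.\<close>

lemma branch_inverse_in_sheet:
  assumes e: "\<And>k. \<bar>e$k\<bar> = 1"
    and sum_pos: "\<And>z. (\<And>k. 0 < z$k) \<Longrightarrow> rho z < 0 \<Longrightarrow> 0 < coord_sum (signed_sqrt e z)"
    and z: "rho z < 0"
  shows "in_sheet e (h_poly (signed_sqrt e z))"
    "\<exists>c. c \<noteq> 0 \<and> g_poly (h_poly (h_poly (signed_sqrt e z))) = c *\<^sub>R z"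
proof -
  obtain p c where p: "\<And>k. 0 < p$k" and c: "c \<noteq> 0" "z = c *\<^sub>R p"
    and h_eq: "h_poly (signed_sqrt e z) = h_poly (signed_sqrt e p)"
  proof (cases rule: rho_neg_imp_coords_same_sign[OF z])
    case 1
    then show ?thesis
      using that[of z 1] by simp
  next
    case 2
    have "h_poly (signed_sqrt e z) = h_poly (signed_sqrt e (- z))"
      using h_poly_scaleR[of "-1"] signed_sqrt_scaleR[of e "-1" z] by (simp add: real_sqrt_minus)
    then show ?thesis
      using that[of "- z" "-1"] 2 by simp
  qed
  have "rho p < 0"
    using z c by (simp add: rho_scaleR mult_less_0_iff)
  note pos = branch_inverse_in_sheet_pos[OF e sum_pos[OF p this] p this]
  show "in_sheet e (h_poly (signed_sqrt e z))"
    using pos(1) h_eq by simp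
  show "\<exists>c. c \<noteq> 0 \<and> g_poly (h_poly (h_poly (signed_sqrt e z))) = c *\<^sub>R z"
    using pos(2,3) c h_eq by (intro exI[of _ "(line_prod (signed_sqrt e p))\<^sup>2 / c"]) auto
qed

lemma U_eq_proj_region: "U = proj_region (\<lambda>z. rho z < 0)"
  unfolding U_def proj_region_def by auto

lemma topspace_U: "topspace (subtopology RP2_top U) = U"
  using proj_region_subset_RP2 by (auto simp: U_eq_proj_region topspace_RP2_top)

lemma scale_invariant_rho_neg: "scale_invariant (\<lambda>z. rho z < 0)"
  unfolding scale_invariant_def by (auto simp: rho_scaleR mult_less_0_iff)

lemma open_rho_neg: "open {z. z \<noteq> 0 \<and> rho z < 0}"
  unfolding rho_def by (intro open_Collect_conj open_Collect_neq open_Collect_less continuous_intros)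

text \<open>Since \<open>\<rho> (g w) = - coord_sum w * line_prod w\<close>, the hypothesis on \<open>e\<close> makes
  \<open>line_prod w\<close> positive for \<open>w = signed_sqrt e z\<close>; this is what puts \<open>h w\<close> into the sheet.\<close>

lemma homeomorphic_map_sheet:
  assumes e: "\<And>k. \<bar>e$k\<bar> = 1"
    and sum_pos: "\<And>z. (\<And>k. 0 < z$k) \<Longrightarrow> rho z < 0 \<Longrightarrow> 0 < coord_sum (signed_sqrt e z)"
  shows "homeomorphic_map (subtopology RP2_top (sheet e)) (subtopology RP2_top U) fP"
proof -
  have cont: "continuous_on S (\<lambda>x. g_poly (h_poly x))" "continuous_on S (\<lambda>z. h_poly (signed_sqrt e z))"
    for S
    using continuous_on_compose[OF continuous_on_h_poly continuous_on_g_poly]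
      continuous_on_compose[OF continuous_on_signed_sqrt continuous_on_h_poly]
    by (simp_all add: comp_def)
  have "homeomorphic_maps (subtopology RP2_top (sheet e)) (subtopology RP2_top U)
      (proj_map (g_poly \<circ> h_poly)) (proj_map (h_poly \<circ> signed_sqrt e))"
    unfolding sheet_def U_eq_proj_region
  proof (rule homeomorphic_maps_proj_map)
    fix x
    assume x: "x \<noteq> 0" "in_sheet e x"
    from in_sheet_branch_inverse[OF e x(2)] show "(g_poly \<circ> h_poly) x \<noteq> 0 \<and> rho ((g_poly \<circ> h_poly) x) < 0
        \<and> proj ((h_poly \<circ> signed_sqrt e) ((g_poly \<circ> h_poly) x)) = proj x"
      by (auto simp: proj_scaleR rho_def)
  next
    fix z
    assume z: "z \<noteq> 0" "rho z < 0"
    from branch_inverse_in_sheet[OF e sum_pos z(2)] show "(h_poly \<circ> signed_sqrt e) z \<noteq> 0 \<and> in_sheet e ((h_poly \<circ> signed_sqrt e) z)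
        \<and> proj ((g_poly \<circ> h_poly) ((h_poly \<circ> signed_sqrt e) z)) = proj z"
      using in_sheet_nonzero by (auto simp: proj_scaleR)
  qed (simp_all add: cont scale_invariant_in_sheet open_in_sheet scale_invariant_rho_neg open_rho_neg
      proj_homogeneous_comp proj_homogeneous_g_poly proj_homogeneous_h_poly
      proj_homogeneous_signed_sqrt)
  moreover have "proj_map (g_poly \<circ> h_poly) L = fP L" if "L \<in> topspace (subtopology RP2_top (sheet e))" for L
  proof -
    have "L \<in> proj_region (in_sheet e)"
      using that by (simp add: topspace_sheet sheet_def)
    then obtain x where x: "x \<noteq> 0" "in_sheet e x" "L = proj x"
      by (rule proj_regionE)
    moreover have "h_poly x \<noteq> 0"
      using x(2) by (rule in_sheet_h_poly_nonzero)
    ultimately show ?thesis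
      using x by (simp add: fP_proj proj_map_proj proj_homogeneous_comp proj_homogeneous_g_poly
          proj_homogeneous_h_poly)
  qed
  ultimately show ?thesis
    by (meson homeomorphic_map_eq homeomorphic_map_maps)
qed

section \<open>The four sheets \<open>U\<^sub>0, \<dots>, U\<^sub>3\<close>\<close>

definition sign_flip :: "3 \<Rightarrow> real^3" where
  "sign_flip i = (\<chi> k. if k = i then -1 else 1)"

definition sheet_signs :: "(real^3) set" where
  "sheet_signs = {1, sign_flip 1, sign_flip 2, sign_flip 3}"

lemma line_forms_eq_inner: "line_forms x $ k = inner (sign_flip k) x"
  using exhaust_3[of k] by (auto simp: inner_vec_def sum_3 sign_flip_def line_forms_nth)

text \<open>\<open>\<rho> (g u)\<close> is Heron's product \<open>-(u\<^sub>1+u\<^sub>2+u\<^sub>3)(-u\<^sub>1+u\<^sub>2+u\<^sub>3)(u\<^sub>1-u\<^sub>2+u\<^sub>3)(u\<^sub>1+u\<^sub>2-u\<^sub>3)\<close>,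
  so the square roots of a point of \<open>U\<close> satisfy the strict triangle inequalities.\<close>

lemma line_forms_pos_of_rho_g_poly_neg:
  assumes u: "\<And>k. 0 < u$k" and rho: "rho (g_poly u) < 0"
  shows "0 < line_forms u $ k"
proof -
  have "0 < coord_sum u"
    using u[of 1] u[of 2] u[of 3] by (simp add: coord_sum_def)
  then have "0 < line_prod u"
    using rho by (simp add: rho_g_poly zero_less_mult_iff mult_less_0_iff)
  then show ?thesis
    using u[of 1] u[of 2] u[of 3] exhaust_3[of k]
      pos_of_mult_pos_add_pos[of "line_forms u $ 1" "line_forms u $ 2" "line_forms u $ 3"]
      pos_of_mult_pos_add_pos[of "line_forms u $ 2" "line_forms u $ 1" "line_forms u $ 3"]
      pos_of_mult_pos_add_pos[of "line_forms u $ 3" "line_forms u $ 1" "line_forms u $ 2"]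
    by (auto simp: line_prod_def line_forms_nth algebra_simps)
qed

lemma sheet_signs_abs: "e \<in> sheet_signs \<Longrightarrow> \<bar>e$k\<bar> = 1"
  by (auto simp: sheet_signs_def sign_flip_def)

lemma sheet_signs_coord_sum_pos:
  assumes e: "e \<in> sheet_signs" and z: "\<And>k. 0 < z$k" "rho z < 0"
  shows "0 < coord_sum (signed_sqrt e z)"
proof -
  have "g_poly (signed_sqrt 1 z) = z"
    using z(1) by (intro g_poly_signed_sqrt) (auto intro: less_imp_le)
  then have "0 < line_forms (signed_sqrt 1 z) $ i" for i
    using z by (intro line_forms_pos_of_rho_g_poly_neg) (auto simp: signed_sqrt_def)
  moreover have "coord_sum (signed_sqrt (sign_flip i) z) = line_forms (signed_sqrt 1 z) $ i" for i
    using exhaust_3[of i]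
    by (auto simp: coord_sum_def line_forms_nth signed_sqrt_def sign_flip_def)
  moreover have "0 < coord_sum (signed_sqrt 1 z)"
    using z(1)[of 1] z(1)[of 2] z(1)[of 3] by (simp add: coord_sum_def signed_sqrt_def add_pos_pos)
  ultimately show ?thesis
    using e by (auto simp: sheet_signs_def)
qed

lemma homeomorphic_map_sheet_signs:
  "e \<in> sheet_signs \<Longrightarrow> homeomorphic_map (subtopology RP2_top (sheet e)) (subtopology RP2_top U) fP"
  by (intro homeomorphic_map_sheet sheet_signs_abs sheet_signs_coord_sum_pos)

lemma sheet_disjoint:
  assumes "\<And>k. \<bar>e$k\<bar> = 1" "\<And>k. \<bar>e'$k\<bar> = 1" "e \<noteq> e'"
  shows "disjnt (sheet e) (sheet e')"
proof -
  have not_both: "\<not> (in_sheet e x \<and> in_sheet e' x)" for x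
  proof
    assume x: "in_sheet e x \<and> in_sheet e' x"
    have "e$k = e'$k" for k
    proof -
      have "0 < e$k * h_poly x $ k" "0 < e'$k * h_poly x $ k"
        using x by (auto simp: in_sheet_def)
      then show ?thesis
        using assms(1)[of k] assms(2)[of k]
        by (auto simp: abs_if zero_less_mult_iff split: if_splits)
    qed
    with assms(3) show False
      by (simp add: vec_eq_iff)
  qed
  show ?thesis
    unfolding disjnt_def
  proof (rule equals0I)
    fix L
    assume L: "L \<in> sheet e \<inter> sheet e'"
    then obtain x where x: "x \<noteq> 0" "in_sheet e x" "L = proj x"
      unfolding sheet_def by (blast elim: proj_regionE)
    then have "in_sheet e' x"
      using L proj_mem_proj_region[OF scale_invariant_in_sheet x(1)] by (simp add: sheet_def)
    with x(2) not_both show False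
      by blast
  qed
qed

lemma card_sheet_signs: "card sheet_signs = 4"
  by (simp add: sheet_signs_def sign_flip_def vec_eq_iff forall_3)

definition positive_cone :: "(real^3) set" where
  "positive_cone = {x. \<forall>k. 0 < line_forms x $ k}"

lemma sheet_one_eq: "sheet 1 = proj ` positive_cone"
proof (intro set_eqI iffI)
  fix L
  assume "L \<in> sheet 1"
  then obtain x where x: "x \<noteq> 0" "in_sheet 1 x" "L = proj x"
    unfolding sheet_def by (rule proj_regionE)
  then have pos: "0 < line_forms x $ k * coord_sum x" for k
    using in_sheet_iff_line_forms[of x 1] by (simp add: in_sheet_def)
  then have "coord_sum x \<noteq> 0"
    by fastforce
  moreover have "coord_sum x *\<^sub>R x \<in> positive_cone"
    using pos by (simp add: positive_cone_def line_forms_scaleR mult.commute)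
  ultimately show "L \<in> proj ` positive_cone"
    using x(3) by (metis image_eqI proj_scaleR)
next
  fix L
  assume "L \<in> proj ` positive_cone"
  then obtain x where x: "\<And>k. 0 < line_forms x $ k" "L = proj x"
    by (auto simp: positive_cone_def)
  have "x \<noteq> 0"
    using x(1)[of 1] by auto
  moreover have "rho x < 0"
    using mult_pos_pos[OF x(1)[of 1] x(1)[of 2]] mult_pos_pos[OF x(1)[of 2] x(1)[of 3]]
      mult_pos_pos[OF x(1)[of 1] x(1)[of 3]]
    unfolding rho_line_forms by linarith
  moreover have "0 < coord_sum x"
    using x(1)[of 1] x(1)[of 2] x(1)[of 3] by (simp add: coord_sum_line_forms)
  ultimately show "L \<in> sheet 1"
    using x by (auto simp: sheet_def proj_region_def in_sheet_iff_line_forms)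
qed

lemma U0_eq_sheet: "U0 = sheet 1"
proof -
  have vertices: "t1 *\<^sub>R vector [0, 1, 1] + t2 *\<^sub>R vector [1, 0, 1] + t3 *\<^sub>R vector [1, 1, 0]
      = (vector [t2 + t3, t1 + t3, t1 + t2] :: real^3)" for t1 t2 t3 :: real
    by (simp add: vec3_eq_iff)
  have "U0 = proj ` positive_cone"
  proof (intro set_eqI iffI)
    fix L
    assume "L \<in> U0"
    then obtain t1 t2 t3 :: real where "0 < t1" "0 < t2" "0 < t3"
      and L: "L = proj (vector [t2 + t3, t1 + t3, t1 + t2])"
      unfolding U0_def vertices by blast
    then have "vector [t2 + t3, t1 + t3, t1 + t2] \<in> positive_cone"
      by (simp add: positive_cone_def forall_3 line_forms_nth)
    with L show "L \<in> proj ` positive_cone"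
      by blast
  next
    fix L
    assume "L \<in> proj ` positive_cone"
    then obtain x where x: "\<And>k. 0 < line_forms x $ k" "L = proj x"
      by (auto simp: positive_cone_def)
    have "vector [line_forms x $ 2 / 2 + line_forms x $ 3 / 2, line_forms x $ 1 / 2 + line_forms x $ 3 / 2,
        line_forms x $ 1 / 2 + line_forms x $ 2 / 2] = x"
      by (simp add: vec3_eq_iff line_forms_nth field_simps)
    then show "L \<in> U0"
      unfolding U0_def vertices using x
      by (intro CollectI exI[of _ "line_forms x $ 1 / 2"] exI[of _ "line_forms x $ 2 / 2"]
          exI[of _ "line_forms x $ 3 / 2"]) simp
  qed
  then show ?thesis
    by (simp add: sheet_one_eq)
qed

lemma in_sheet_sign_flip_iff:
  assumes "rho x < 0"
  shows "in_sheet (sign_flip i) x \<longleftrightarrow> line_forms x $ i * coord_sum x < 0"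
  using assms rho_neg_imp_line_forms_mult_sum_pos[OF assms]
  by (auto simp: in_sheet_iff_line_forms sign_flip_def)

lemma Ureg_line_form_eq_sheet: "Ureg (\<lambda>x. line_forms x $ i) = sheet (sign_flip i)"
proof -
  have "{x. x \<noteq> 0 \<and> rho x < 0 \<and> line_forms x $ i * (x$1 + x$2 + x$3) < 0}
      = {x. x \<noteq> 0 \<and> in_sheet (sign_flip i) x}"
    using in_sheet_sign_flip_iff in_sheet_imp_rho_neg by (auto simp: coord_sum_def)
  then show ?thesis
    unfolding Ureg_def sheet_def proj_region_def by blast
qed

lemma U_eq_sheet_sign_flip:
  "U1 = sheet (sign_flip 1)" "U2 = sheet (sign_flip 2)" "U3 = sheet (sign_flip 3)"
  unfolding U1_def U2_def U3_def Ureg_line_form_eq_sheet[symmetric] by (simp_all add: line_forms_nth)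

lemma span_pair: "span {u, v} = {a *\<^sub>R u + b *\<^sub>R v | a b. True}"
  unfolding span_insert span_singleton by (auto simp: algebra_simps)

lemma A_eq_proj_region:
  "A1 = proj_region (\<lambda>x. line_forms x $ 1 = 0)"
  "A2 = proj_region (\<lambda>x. line_forms x $ 2 = 0)"
  "A3 = proj_region (\<lambda>x. line_forms x $ 3 = 0)"
proof -
  have "span {vector [1, 0, 1], vector [1, 1, 0]} = {x :: real^3. line_forms x $ 1 = 0}"
    "span {vector [0, 1, 1], vector [1, 1, 0]} = {x :: real^3. line_forms x $ 2 = 0}"
    "span {vector [0, 1, 1], vector [1, 0, 1]} = {x :: real^3. line_forms x $ 3 = 0}"
    unfolding span_pair
    by (auto simp: vec3_eq_iff line_forms_nth intro!: exI[of _ "x$3" for x] exI[of _ "x$2" for x]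
        exI[of _ "x$1" for x])
  then show "A1 = proj_region (\<lambda>x. line_forms x $ 1 = 0)"
    "A2 = proj_region (\<lambda>x. line_forms x $ 2 = 0)"
    "A3 = proj_region (\<lambda>x. line_forms x $ 3 = 0)"
    unfolding A1_def A2_def A3_def proj_line_def proj_region_def by auto
qed

lemma scale_invariant_line_form_zero: "scale_invariant (\<lambda>x. line_forms x $ k = 0)"
  unfolding scale_invariant_def by (simp add: line_forms_scaleR)

lemma U_minus_lines_eq:
  "U - (A1 \<union> A2 \<union> A3) = proj_region (\<lambda>x. rho x < 0 \<and> (\<forall>k. line_forms x $ k \<noteq> 0))"
proof -
  have "scale_invariant (\<lambda>x. rho x < 0 \<and> (\<forall>k. line_forms x $ k \<noteq> 0))"
    using scale_invariant_rho_neg scale_invariant_line_form_zero unfolding scale_invariant_def by blast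
  then have "proj x \<in> U - (A1 \<union> A2 \<union> A3)
      \<longleftrightarrow> proj x \<in> proj_region (\<lambda>x. rho x < 0 \<and> (\<forall>k. line_forms x $ k \<noteq> 0))" if "x \<noteq> 0" for x
    using that scale_invariant_rho_neg scale_invariant_line_form_zero
    by (simp add: U_eq_proj_region A_eq_proj_region proj_mem_proj_region forall_3)
  moreover have "L \<in> U \<or> L \<in> proj_region (\<lambda>x. rho x < 0 \<and> (\<forall>k. line_forms x $ k \<noteq> 0))
      \<Longrightarrow> \<exists>x. x \<noteq> 0 \<and> L = proj x" for L
    by (auto simp: U_eq_proj_region proj_region_def)
  ultimately show ?thesis
    by blast
qed

lemma U_minus_lines_eq_Union_sheets: "U - (A1 \<union> A2 \<union> A3) = \<Union> (sheet ` sheet_signs)"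
proof (intro set_eqI iffI)
  fix L
  assume "L \<in> U - (A1 \<union> A2 \<union> A3)"
  then obtain x where x: "x \<noteq> 0" "rho x < 0" "\<And>k. line_forms x $ k \<noteq> 0" "L = proj x"
    unfolding U_minus_lines_eq by (blast elim: proj_regionE)
  have "coord_sum x \<noteq> 0"
    using rho_neg_imp_coord_mult_sum_pos[OF x(2), of 1] by auto
  then have "\<exists>e \<in> sheet_signs. in_sheet e x"
  proof (cases "\<forall>k. 0 < line_forms x $ k * coord_sum x")
    case True
    then show ?thesis
      using x(2) by (auto simp: sheet_signs_def in_sheet_iff_line_forms)
  next
    case False
    then obtain i where "line_forms x $ i * coord_sum x < 0"
      using x(3) \<open>coord_sum x \<noteq> 0\<close> by (metis linorder_neqE_linordered_idom mult_eq_0_iff)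
    then have "in_sheet (sign_flip i) x"
      using x(2) by (simp add: in_sheet_sign_flip_iff)
    then show ?thesis
      using exhaust_3[of i] by (auto simp: sheet_signs_def)
  qed
  then show "L \<in> \<Union> (sheet ` sheet_signs)"
    using x by (auto simp: sheet_def proj_region_def)
next
  fix L
  assume "L \<in> \<Union> (sheet ` sheet_signs)"
  then obtain e x where "x \<noteq> 0" "in_sheet e x" "L = proj x"
    unfolding sheet_def by (blast elim: proj_regionE)
  then show "L \<in> U - (A1 \<union> A2 \<union> A3)"
    unfolding U_minus_lines_eq proj_region_def
    using in_sheet_imp_rho_neg in_sheet_line_forms_nonzero by blast
qed

section \<open>Connected components\<close>

lemma convex_positive_cone: "convex positive_cone"
proof -
  have eq: "positive_cone = (\<Inter>k. {x. inner (sign_flip k) x > 0})"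
    by (auto simp: positive_cone_def line_forms_eq_inner)
  show ?thesis
    unfolding eq by (intro convex_INT convex_halfspace_gt)
qed

lemma connectedin_sheet_one: "connectedin RP2_top (sheet 1)"
proof -
  have "0 \<notin> positive_cone"
    by (simp add: positive_cone_def)
  moreover have "connectedin (top_of_set positive_cone) positive_cone"
    using convex_connected[OF convex_positive_cone] by (simp add: connectedin_subtopology)
  ultimately show ?thesis
    unfolding sheet_one_eq by (rule connectedin_continuous_map_image[OF continuous_map_proj])
qed

lemma connectedin_sheet:
  assumes "e \<in> sheet_signs"
  shows "connectedin RP2_top (sheet e)"
proof -
  have "connected_space (subtopology RP2_top (sheet 1))"
    using connectedin_sheet_one by (simp add: connectedin_def)
  moreover have "1 \<in> sheet_signs"
    by (simp add: sheet_signs_def)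
  ultimately have "connected_space (subtopology RP2_top U)"
    using homeomorphic_connected_space homeomorphic_map_imp_homeomorphic_space
      homeomorphic_map_sheet_signs by blast
  then have "connected_space (subtopology RP2_top (sheet e))"
    using assms homeomorphic_connected_space homeomorphic_map_imp_homeomorphic_space
      homeomorphic_map_sheet_signs by blast
  then show ?thesis
    using proj_region_subset_RP2 by (simp add: connectedin_def sheet_def topspace_RP2_top)
qed

lemma sheet_nonempty: "e \<in> sheet_signs \<Longrightarrow> sheet e \<noteq> {}"
proof -
  assume "e \<in> sheet_signs"
  have "proj 1 \<in> U"
    by (auto simp: U_def rho_def intro!: exI[of _ 1])
  moreover have "fP ` sheet e = U"
    using homeomorphic_imp_surjective_map[OF homeomorphic_map_sheet_signs[OF \<open>e \<in> sheet_signs\<close>]]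
    unfolding topspace_sheet topspace_U .
  ultimately show ?thesis
    by auto
qed

lemma inj_on_sheet: "inj_on sheet sheet_signs"
proof (rule inj_onI)
  fix e e'
  assume e: "e \<in> sheet_signs" "e' \<in> sheet_signs" and eq: "sheet e = sheet e'"
  show "e = e'"
  proof (rule ccontr)
    assume "e \<noteq> e'"
    then have "disjnt (sheet e) (sheet e')"
      using e by (intro sheet_disjoint sheet_signs_abs)
    with eq sheet_nonempty[OF e(1)] show False
      by (simp add: disjnt_def)
  qed
qed

lemma connected_components_of_U_minus_lines:
  "connected_components_of (subtopology RP2_top (U - (A1 \<union> A2 \<union> A3))) = sheet ` sheet_signs"
proof (rule connected_components_of_open_partition)
  have "U \<subseteq> RP2"
    by (simp add: U_eq_proj_region proj_region_subset_RP2)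
  then show "\<Union> (sheet ` sheet_signs) = topspace (subtopology RP2_top (U - (A1 \<union> A2 \<union> A3)))"
    by (auto simp: topspace_RP2_top U_minus_lines_eq_Union_sheets[symmetric])
  show "pairwise disjnt (sheet ` sheet_signs)"
    by (intro pairwise_imageI sheet_disjoint) (auto simp: sheet_signs_abs)
next
  fix C
  assume "C \<in> sheet ` sheet_signs"
  then obtain e where e: "e \<in> sheet_signs" "C = sheet e"
    by blast
  moreover have "C \<subseteq> U - (A1 \<union> A2 \<union> A3)"
    using e by (auto simp: U_minus_lines_eq_Union_sheets)
  moreover have "openin RP2_top C"
    unfolding e sheet_def by (intro openin_proj_region scale_invariant_in_sheet open_in_sheet)
  ultimately show "C \<noteq> {}" "connectedin (subtopology RP2_top (U - (A1 \<union> A2 \<union> A3))) C"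
    "openin (subtopology RP2_top (U - (A1 \<union> A2 \<union> A3))) C"
    by (auto simp: sheet_nonempty connectedin_sheet connectedin_subtopology openin_subtopology
        intro!: exI[of _ C])
qed

theorem mainTheorem17:
  shows "connected_components_of (subtopology RP2_top (U - (A1 \<union> A2 \<union> A3))) = {U0, U1, U2, U3}
    \<and> card {U0, U1, U2, U3} = 4
    \<and> (\<forall>V \<in> {U0, U1, U2, U3}.
          homeomorphic_map (subtopology RP2_top V) (subtopology RP2_top U) fP)"
proof -
  have sheets: "{U0, U1, U2, U3} = sheet ` sheet_signs"
    by (simp add: sheet_signs_def U0_eq_sheet U_eq_sheet_sign_flip)
  show ?thesis
    unfolding sheets
    using connected_components_of_U_minus_lines card_image[OF inj_on_sheet] card_sheet_signs
      homeomorphic_map_sheet_signs by auto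
qed

end
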